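(* Let $X$ be a random variable having finite CIGF $G_X(\alpha,\beta)$ for $(\alpha,\beta)\in D_X$. If $(0,1)\in D_X$, then $$\mathcal{CRE}_n(X)=\frac{(-1)^n}{n!}\frac{\partial^n}{\partial\beta^n}G_X(\alpha,\beta)\Big|_{\alpha=0,\beta=1},\qquad n\in\mathbb{N}_0.$$ If $(1,0)\in D_X$, then $$\mathcal{CE}_n(X)=\frac{(-1)^n}{n!}\frac{\partial^n}{\partial\alpha^n}G_X(\alpha,\beta)\Big|_{\alpha=1,\beta=0},\qquad n\in\mathbb{N}.$$
   Context: For a random variable $X$ with CDF $F$ and survival function $\overline F=1-F$, let $l=\inf\{x:F(x)>0\}$, $r=\sup\{x:\overline F(x)>0\}$. The CIGF of $X$ is $G_X(\alpha,\beta)=\int_l^r [F(x)]^\alpha[\overline F(x)]^\beta\,dx$ on $D_X=\{(\alpha,\beta)\in\mathbb{R}^2: G_X(\alpha,\beta)<\infty\}$. The generalized cumulative residual entropy of order $n$ is $\mathcal{CRE}_n(X)=\frac{1}{n!}\int_l^r\overline F(x)[-\log\overline F(x)]^n\,dx$ and the generalized cumulative entropy of order $n$ is $\mathcal{CE}_n(X)=\frac{1}{n!}\int_l^r F(x)[-\log F(x)]^n\,dx$. $\mathbb{N}$ denotes positive integers and $\mathbb{N}_0=\mathbb{N}\cup\{0\}$. *)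

theory Defs
  imports "HOL-Probability.Probability"
begin

text \<open>The support interval (l,r) is represented (up to its endpoints, a Lebesgue null set) by
  the set of points where 0 < F x < 1.\<close>

definition supp_int :: "real measure \<Rightarrow> real set" where
  "supp_int M = {x. 0 < cdf M x \<and> cdf M x < 1}"

definition CIGF :: "real measure \<Rightarrow> real \<Rightarrow> real \<Rightarrow> real" where
  "CIGF M a b = (LINT x : supp_int M | lborel. (cdf M x) powr a * (1 - cdf M x) powr b)"

definition CIGF_dom :: "real measure \<Rightarrow> (real \<times> real) set" where
  "CIGF_dom M = {(a, b). (\<integral>\<^sup>+ x \<in> supp_int M. ennreal ((cdf M x) powr a * (1 - cdf M x) powr b) \<partial>lborel) < \<infinity>}"

definition CRE_n :: "nat \<Rightarrow> real measure \<Rightarrow> real" where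
  "CRE_n n M = (1 / fact n) * (LINT x : supp_int M | lborel. (1 - cdf M x) * (- ln (1 - cdf M x)) ^ n)"

definition CE_n :: "nat \<Rightarrow> real measure \<Rightarrow> real" where
  "CE_n n M = (1 / fact n) * (LINT x : supp_int M | lborel. cdf M x * (- ln (cdf M x)) ^ n)"

definition has_nth_deriv_within :: "(real \<Rightarrow> real) \<Rightarrow> nat \<Rightarrow> real set \<Rightarrow> real \<Rightarrow> real \<Rightarrow> bool" where
  "has_nth_deriv_within f n S x D \<longleftrightarrow>
     (\<exists>g :: nat \<Rightarrow> real \<Rightarrow> real. g 0 = f \<and>
        (\<forall>k<n. \<forall>t\<in>S. (g k has_real_derivative g (Suc k) t) (at t within S)) \<and> g n x = D)"

end

theory Submission imports Defs begin

(* With u = 1 - F (resp. u = F) one has 0 < u < 1 on the support, and the CIGF as a function of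
   the remaining variable is s \<mapsto> \<integral> u^s.  For s \<ge> 1 every s-derivative u^s (ln u)^k, k \<le> n,
   of the integrand is dominated by u + u (-ln u)^n, which is integrable by the hypotheses, so
   the integral may be differentiated n times under the integral sign on [1, \<infinity>); at s = 1
   the n-th derivative is \<integral> u (ln u)^n = (-1)^n \<integral> u (-ln u)^n. *)

lemma has_real_derivative_integral_dominated:
  fixes f f' :: "real \<Rightarrow> 'a \<Rightarrow> real"
  assumes "convex S" "t \<in> S"
    and f_integrable: "\<And>s. s \<in> S \<Longrightarrow> integrable M (f s)"
    and measurable: "f' t \<in> borel_measurable M"
    and deriv: "\<And>x s. x \<in> space M \<Longrightarrow> s \<in> S \<Longrightarrow> ((\<lambda>s. f s x) has_real_derivative f' s x) (at s within S)"
    and dominated: "integrable M g" "\<And>x s. x \<in> space M \<Longrightarrow> s \<in> S \<Longrightarrow> \<bar>f' s x\<bar> \<le> g x"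
  shows "((\<lambda>s. \<integral>x. f s x \<partial>M) has_real_derivative (\<integral>x. f' t x \<partial>M)) (at t within S)"
proof -
  have "((\<lambda>s. ((\<integral>x. f s x \<partial>M) - (\<integral>x. f t x \<partial>M)) / (s - t)) \<longlongrightarrow> (\<integral>x. f' t x \<partial>M)) (at t within S)"
    unfolding tendsto_at_iff_sequentially comp_def
  proof (intro allI impI)
    fix X :: "nat \<Rightarrow> real"
    assume X: "\<forall>i. X i \<in> S - {t}" and "X \<longlonglongrightarrow> t"
    define q where "q i x = (f (X i) x - f t x) / (X i - t)" for i x
    have "(\<lambda>i. \<integral>x. q i x \<partial>M) \<longlonglongrightarrow> (\<integral>x. f' t x \<partial>M)"
    proof (rule integral_dominated_convergence[OF measurable _ dominated(1)])
      show "q i \<in> borel_measurable M" for i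
        unfolding q_def using X \<open>t \<in> S\<close>
        by (intro borel_measurable_divide borel_measurable_diff borel_measurable_const
            borel_measurable_integrable[OF f_integrable]) auto
      show "AE x in M. (\<lambda>i. q i x) \<longlonglongrightarrow> f' t x"
      proof (rule AE_I2)
        fix x assume "x \<in> space M"
        then have "((\<lambda>s. (f s x - f t x) / (s - t)) \<longlongrightarrow> f' t x) (at t within S)"
          using deriv \<open>t \<in> S\<close> by (simp add: has_field_derivative_iff)
        then show "(\<lambda>i. q i x) \<longlonglongrightarrow> f' t x"
          unfolding q_def tendsto_at_iff_sequentially comp_def using X \<open>X \<longlonglongrightarrow> t\<close> by blast
      qed
      show "AE x in M. norm (q i x) \<le> g x" for i
      proof (rule AE_I2)
        fix x assume "x \<in> space M"
        then have "\<bar>f (X i) x - f t x\<bar> \<le> g x * \<bar>X i - t\<bar>"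
          using field_differentiable_bound[OF \<open>convex S\<close>, of "\<lambda>s. f s x" "\<lambda>s. f' s x" "g x"]
            deriv dominated(2) X \<open>t \<in> S\<close> by auto
        then show "norm (q i x) \<le> g x"
          using X by (simp add: q_def divide_le_eq)
      qed
    qed
    moreover have "(\<integral>x. q i x \<partial>M) = ((\<integral>x. f (X i) x \<partial>M) - (\<integral>x. f t x \<partial>M)) / (X i - t)" for i
      unfolding q_def using X \<open>t \<in> S\<close> by (simp add: f_integrable)
    ultimately show "(\<lambda>i. ((\<integral>x. f (X i) x \<partial>M) - (\<integral>x. f t x \<partial>M)) / (X i - t)) \<longlonglongrightarrow> (\<integral>x. f' t x \<partial>M)"
      by simp
  qed
  then show ?thesis
    by (simp add: has_field_derivative_iff)
qed

lemma abs_powr_mult_ln_power_le: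
  fixes v s :: real
  assumes "0 < v" "v \<le> 1" "1 \<le> s" "j \<le> n"
  shows "\<bar>v powr s * ln v ^ j\<bar> \<le> v + v * (- ln v) ^ n"
proof -
  have "0 \<le> - ln v"
    using assms by simp
  then have abs_ln: "\<bar>ln v\<bar> = - ln v"
    by simp
  have "v powr s \<le> v"
    using powr_mono'[of 1 s v] assms by simp
  moreover have "(- ln v) ^ j \<le> 1 + (- ln v) ^ n"
  proof (cases "- ln v \<le> 1")
    case True
    then have "(- ln v) ^ j \<le> 1"
      using abs_ln by (metis abs_ge_zero power_le_one)
    then show ?thesis
      using abs_ln by (metis abs_ge_zero add_increasing2 zero_le_power)
  next
    case False
    then have "(- ln v) ^ j \<le> (- ln v) ^ n"
      using \<open>j \<le> n\<close> by (intro power_increasing) auto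
    then show ?thesis by simp
  qed
  ultimately have "v powr s * (- ln v) ^ j \<le> v * (1 + (- ln v) ^ n)"
    using \<open>0 \<le> - ln v\<close> assms(1) by (intro mult_mono) auto
  then show ?thesis
    by (simp add: abs_mult power_abs abs_ln distrib_left)
qed

context
  fixes M :: "'a measure" and u :: "'a \<Rightarrow> real" and n :: nat
  assumes measurable: "u \<in> borel_measurable M"
    and pos: "\<And>x. x \<in> space M \<Longrightarrow> 0 < u x"
    and le_one: "\<And>x. x \<in> space M \<Longrightarrow> u x \<le> 1"
    and u_integrable: "integrable M u"
    and neg_ln_power_integrable: "integrable M (\<lambda>x. u x * (- ln (u x)) ^ n)"
begin

lemma integrable_powr_mult_ln_power:
  assumes "1 \<le> s" "j \<le> n"
  shows "integrable M (\<lambda>x. u x powr s * ln (u x) ^ j)"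
proof (rule Bochner_Integration.integrable_bound)
  show "integrable M (\<lambda>x. u x + u x * (- ln (u x)) ^ n)"
    using u_integrable neg_ln_power_integrable by simp
  show "(\<lambda>x. u x powr s * ln (u x) ^ j) \<in> borel_measurable M"
    using measurable by measurable
  show "AE x in M. norm (u x powr s * ln (u x) ^ j) \<le> norm (u x + u x * (- ln (u x)) ^ n)"
  proof (rule AE_I2)
    fix x assume "x \<in> space M"
    then have "\<bar>u x powr s * ln (u x) ^ j\<bar> \<le> u x + u x * (- ln (u x)) ^ n"
      using abs_powr_mult_ln_power_le pos le_one assms by blast
    then show "norm (u x powr s * ln (u x) ^ j) \<le> norm (u x + u x * (- ln (u x)) ^ n)"
      by (metis abs_ge_self order_trans real_norm_def)
  qed
qed

lemma has_real_derivative_integral_powr_mult_ln_power: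
  assumes "k < n" "1 \<le> t"
  shows "((\<lambda>s. \<integral>x. u x powr s * ln (u x) ^ k \<partial>M) has_real_derivative
           (\<integral>x. u x powr t * ln (u x) ^ Suc k \<partial>M)) (at t within {1..})"
proof (rule has_real_derivative_integral_dominated)
  show "integrable M (\<lambda>x. u x + u x * (- ln (u x)) ^ n)"
    using u_integrable neg_ln_power_integrable by simp
  show "\<bar>u x powr s * ln (u x) ^ Suc k\<bar> \<le> u x + u x * (- ln (u x)) ^ n"
    if "x \<in> space M" "s \<in> {1..}" for x s
    using abs_powr_mult_ln_power_le pos le_one that assms by (metis Suc_leI atLeast_iff)
  show "((\<lambda>s. u x powr s * ln (u x) ^ k) has_real_derivative u x powr s * ln (u x) ^ Suc k)
          (at s within {1..})" if "x \<in> space M" for x s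
  proof -
    have "((\<lambda>s. u x powr s) has_real_derivative u x powr s * ln (u x)) (at s)"
      using pos[OF that] by (auto intro!: derivative_eq_intros)
    from DERIV_cmult_right[OF this, of "ln (u x) ^ k"] show ?thesis
      by (auto intro: has_field_derivative_at_within simp: mult.assoc)
  qed
  show "integrable M (\<lambda>x. u x powr s * ln (u x) ^ k)" if "s \<in> {1..}" for s
    using integrable_powr_mult_ln_power that \<open>k < n\<close> by simp
  show "(\<lambda>x. u x powr t * ln (u x) ^ Suc k) \<in> borel_measurable M"
    using measurable by measurable
qed (use \<open>1 \<le> t\<close> in auto)

lemma has_nth_deriv_within_integral_powr:
  "has_nth_deriv_within (\<lambda>s. \<integral>x. u x powr s \<partial>M) n {1..} 1 (\<integral>x. u x * ln (u x) ^ n \<partial>M)"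
  unfolding has_nth_deriv_within_def
proof (intro exI conjI)
  let ?g = "\<lambda>k s. \<integral>x. u x powr s * ln (u x) ^ k \<partial>M"
  show "?g 0 = (\<lambda>s. \<integral>x. u x powr s \<partial>M)"
    by simp
  show "\<forall>k<n. \<forall>t\<in>{1..}. (?g k has_real_derivative ?g (Suc k) t) (at t within {1..})"
    using has_real_derivative_integral_powr_mult_ln_power by simp
  show "?g n 1 = (\<integral>x. u x * ln (u x) ^ n \<partial>M)"
    using pos by (intro Bochner_Integration.integral_cong) (simp_all add: less_imp_le)
qed

lemma integral_neg_ln_power_eq_nth_deriv:
  "\<exists>D. has_nth_deriv_within (\<lambda>s. \<integral>x. u x powr s \<partial>M) n {1..} 1 D \<and>
       1 / fact n * (\<integral>x. u x * (- ln (u x)) ^ n \<partial>M) = (-1) ^ n / fact n * D"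
proof (intro exI conjI)
  show "has_nth_deriv_within (\<lambda>s. \<integral>x. u x powr s \<partial>M) n {1..} 1 (\<integral>x. u x * ln (u x) ^ n \<partial>M)"
    by (rule has_nth_deriv_within_integral_powr)
  have "(\<integral>x. u x * (- ln (u x)) ^ n \<partial>M) = (-1) ^ n * (\<integral>x. u x * ln (u x) ^ n \<partial>M)"
    by (subst power_minus, subst mult.left_commute) simp
  then show "1 / fact n * (\<integral>x. u x * (- ln (u x)) ^ n \<partial>M) = (-1) ^ n / fact n * (\<integral>x. u x * ln (u x) ^ n \<partial>M)"
    by simp
qed

end

lemma set_integral_neg_ln_power_eq_nth_deriv:
  fixes u :: "'a \<Rightarrow> real"
  assumes S: "S \<in> sets N" and measurable: "u \<in> borel_measurable N"
    and bounds: "\<And>x. x \<in> S \<Longrightarrow> 0 < u x \<and> u x \<le> 1"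
    and nn_integral_finite: "(\<integral>\<^sup>+x\<in>S. ennreal (u x) \<partial>N) < \<infinity>"
    and neg_ln_power_integrable: "set_integrable N S (\<lambda>x. u x * (- ln (u x)) ^ n)"
  shows "\<exists>D. has_nth_deriv_within (\<lambda>s. LINT x:S|N. u x powr s) n {1..} 1 D \<and>
           1 / fact n * (LINT x:S|N. u x * (- ln (u x)) ^ n) = (-1) ^ n / fact n * D"
proof -
  let ?R = "restrict_space N S"
  have S': "S \<inter> space N \<in> sets N"
    using S by auto
  have space_R: "space ?R = S"
    using S by simp
  have set_integral_eq: "(LINT x:S|N. f x) = (\<integral>x. f x \<partial>?R)" for f :: "'a \<Rightarrow> real"
    unfolding set_lebesgue_integral_def integral_restrict_space[OF S'] ..
  have "\<exists>D. has_nth_deriv_within (\<lambda>s. \<integral>x. u x powr s \<partial>?R) n {1..} 1 D \<and>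
           1 / fact n * (\<integral>x. u x * (- ln (u x)) ^ n \<partial>?R) = (-1) ^ n / fact n * D"
  proof (rule integral_neg_ln_power_eq_nth_deriv)
    show u_measurable: "u \<in> borel_measurable ?R"
      using measurable by (rule measurable_restrict_space1)
    show "integrable ?R u"
    proof (rule integrableI_nonneg[OF u_measurable])
      show "AE x in ?R. 0 \<le> u x"
        using bounds by (intro AE_I2) (simp add: space_R less_imp_le)
      show "(\<integral>\<^sup>+x. ennreal (u x) \<partial>?R) < \<infinity>"
        using nn_integral_finite by (simp add: nn_integral_restrict_space[OF S'])
    qed
    show "integrable ?R (\<lambda>x. u x * (- ln (u x)) ^ n)"
      using neg_ln_power_integrable unfolding set_integrable_def integrable_restrict_space[OF S'] .
  qed (use bounds space_R in auto)
  then show ?thesis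
    by (simp only: set_integral_eq)
qed

context real_distribution
begin

lemma borel_measurable_cdf [measurable]: "cdf M \<in> borel_measurable lborel"
  using borel_measurable_mono cdf_nondecreasing by (simp add: mono_def)

lemma sets_lborel_supp_int: "supp_int M \<in> sets lborel"
  unfolding supp_int_def by measurable

lemma CIGF_zero_left: "CIGF M 0 b = (LINT x:supp_int M|lborel. (1 - cdf M x) powr b)"
  unfolding CIGF_def by (rule set_lebesgue_integral_cong[OF sets_lborel_supp_int]) (simp add: supp_int_def)

lemma CIGF_zero_right: "CIGF M a 0 = (LINT x:supp_int M|lborel. cdf M x powr a)"
  unfolding CIGF_def by (rule set_lebesgue_integral_cong[OF sets_lborel_supp_int]) (simp add: supp_int_def)

lemma zero_one_mem_CIGF_dom_iff:
  "(0, 1) \<in> CIGF_dom M \<longleftrightarrow> (\<integral>\<^sup>+x\<in>supp_int M. ennreal (1 - cdf M x) \<partial>lborel) < \<infinity>"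
proof -
  have "(\<integral>\<^sup>+x\<in>supp_int M. ennreal (cdf M x powr 0 * (1 - cdf M x) powr 1) \<partial>lborel)
      = (\<integral>\<^sup>+x\<in>supp_int M. ennreal (1 - cdf M x) \<partial>lborel)"
    by (intro nn_integral_cong) (simp add: supp_int_def split: split_indicator)
  then show ?thesis
    by (simp add: CIGF_dom_def)
qed

lemma one_zero_mem_CIGF_dom_iff:
  "(1, 0) \<in> CIGF_dom M \<longleftrightarrow> (\<integral>\<^sup>+x\<in>supp_int M. ennreal (cdf M x) \<partial>lborel) < \<infinity>"
proof -
  have "(\<integral>\<^sup>+x\<in>supp_int M. ennreal (cdf M x powr 1 * (1 - cdf M x) powr 0) \<partial>lborel)
      = (\<integral>\<^sup>+x\<in>supp_int M. ennreal (cdf M x) \<partial>lborel)"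
    by (intro nn_integral_cong) (simp add: supp_int_def split: split_indicator)
  then show ?thesis
    by (simp add: CIGF_dom_def)
qed

end

theorem proposition2:
  fixes M :: "real measure"
  assumes "real_distribution M"
  shows "((0, 1) \<in> CIGF_dom M \<longrightarrow>
           (\<forall>n::nat. set_integrable lborel (supp_int M) (\<lambda>x. (1 - cdf M x) * (- ln (1 - cdf M x)) ^ n) \<longrightarrow>
              (\<exists>D. has_nth_deriv_within (\<lambda>b. CIGF M 0 b) n {1..} 1 D \<and>
                   CRE_n n M = (-1) ^ n / fact n * D)))
       \<and> ((1, 0) \<in> CIGF_dom M \<longrightarrow>
           (\<forall>n::nat. n \<ge> 1 \<longrightarrow> set_integrable lborel (supp_int M) (\<lambda>x. cdf M x * (- ln (cdf M x)) ^ n) \<longrightarrow>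
              (\<exists>D. has_nth_deriv_within (\<lambda>a. CIGF M a 0) n {1..} 1 D \<and>
                   CE_n n M = (-1) ^ n / fact n * D)))"
proof -
  interpret real_distribution M by fact
  show ?thesis
  proof (intro conjI impI allI)
    fix n :: nat
    assume "(0, 1) \<in> CIGF_dom M"
      and "set_integrable lborel (supp_int M) (\<lambda>x. (1 - cdf M x) * (- ln (1 - cdf M x)) ^ n)"
    then show "\<exists>D. has_nth_deriv_within (\<lambda>b. CIGF M 0 b) n {1..} 1 D \<and> CRE_n n M = (-1) ^ n / fact n * D"
      unfolding CRE_n_def CIGF_zero_left zero_one_mem_CIGF_dom_iff
      by (intro set_integral_neg_ln_power_eq_nth_deriv sets_lborel_supp_int) (auto simp: supp_int_def)
  next
    fix n :: nat
    assume "(1, 0) \<in> CIGF_dom M"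
      and "set_integrable lborel (supp_int M) (\<lambda>x. cdf M x * (- ln (cdf M x)) ^ n)"
    then show "\<exists>D. has_nth_deriv_within (\<lambda>a. CIGF M a 0) n {1..} 1 D \<and> CE_n n M = (-1) ^ n / fact n * D"
      unfolding CE_n_def CIGF_zero_right one_zero_mem_CIGF_dom_iff
      by (intro set_integral_neg_ln_power_eq_nth_deriv sets_lborel_supp_int) (auto simp: supp_int_def)
  qed
qed

end
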